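(* Every HCA graph with at least one edge contains an essential edge.
   Context: An HCA (Helly circular-arc) graph is a graph $G$ admitting a map $\alpha$ from $V(G)$ to arcs of a discrete circle (sets of consecutive points of a directed cycle) such that distinct vertices $u,v$ are adjacent iff $\alpha(u)\cap\alpha(v)\ne\emptyset$, and the family of arcs has the Helly property (every pairwise intersecting subfamily has a common point). A maxclique is an inclusion-maximal clique; an edge is essential if it is contained in exactly one maxclique. *)

theory Defs
  imports Main
begin

definition simple_graph :: "'v set \<Rightarrow> ('v \<Rightarrow> 'v \<Rightarrow> bool) \<Rightarrow> bool" where
  "simple_graph V E \<longleftrightarrow> finite V \<and> (\<forall>u\<in>V. \<forall>v\<in>V. E u v \<longleftrightarrow> E v u) \<and> (\<forall>v\<in>V. \<not> E v v)"

definition clique :: "'v set \<Rightarrow> ('v \<Rightarrow> 'v \<Rightarrow> bool) \<Rightarrow> 'v set \<Rightarrow> bool" where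
  "clique V E C \<longleftrightarrow> C \<subseteq> V \<and> (\<forall>u\<in>C. \<forall>v\<in>C. u \<noteq> v \<longrightarrow> E u v)"

definition maxclique :: "'v set \<Rightarrow> ('v \<Rightarrow> 'v \<Rightarrow> bool) \<Rightarrow> 'v set \<Rightarrow> bool" where
  "maxclique V E C \<longleftrightarrow> clique V E C \<and> (\<forall>D. clique V E D \<and> C \<subseteq> D \<longrightarrow> D = C)"

definition essential_edge :: "'v set \<Rightarrow> ('v \<Rightarrow> 'v \<Rightarrow> bool) \<Rightarrow> 'v \<Rightarrow> 'v \<Rightarrow> bool" where
  "essential_edge V E u v \<longleftrightarrow> u \<in> V \<and> v \<in> V \<and> E u v \<and>
     (\<exists>!C. maxclique V E C \<and> u \<in> C \<and> v \<in> C)"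

text \<open>The discrete circle with n points is {0..<n} with successor i \<mapsto> (i+1) mod n.
An arc is a nonempty set of consecutive points: starting at s, of length k+1 \<le> n.\<close>
definition is_arc :: "nat \<Rightarrow> nat set \<Rightarrow> bool" where
  "is_arc n A \<longleftrightarrow> (\<exists>s<n. \<exists>k<n. A = {(s + i) mod n | i. i \<le> k})"

definition helly_family :: "nat \<Rightarrow> 'v set \<Rightarrow> ('v \<Rightarrow> nat set) \<Rightarrow> bool" where
  "helly_family n V \<alpha> \<longleftrightarrow>
     (\<forall>F \<subseteq> V. (\<forall>u\<in>F. \<forall>v\<in>F. \<alpha> u \<inter> \<alpha> v \<noteq> {}) \<longrightarrow> (\<exists>p<n. \<forall>v\<in>F. p \<in> \<alpha> v))"

definition HCA_model :: "'v set \<Rightarrow> ('v \<Rightarrow> 'v \<Rightarrow> bool) \<Rightarrow> nat \<Rightarrow> ('v \<Rightarrow> nat set) \<Rightarrow> bool" where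
  "HCA_model V E n \<alpha> \<longleftrightarrow> 0 < n \<and> (\<forall>v\<in>V. is_arc n (\<alpha> v)) \<and>
     (\<forall>u\<in>V. \<forall>v\<in>V. u \<noteq> v \<longrightarrow> (E u v \<longleftrightarrow> \<alpha> u \<inter> \<alpha> v \<noteq> {})) \<and>
     helly_family n V \<alpha>"

definition HCA_graph :: "'v set \<Rightarrow> ('v \<Rightarrow> 'v \<Rightarrow> bool) \<Rightarrow> bool" where
  "HCA_graph V E \<longleftrightarrow> simple_graph V E \<and> (\<exists>n \<alpha>. HCA_model V E n \<alpha>)"

end

theory Submission
  imports Defs
begin

text \<open>Take a non-isolated vertex \<open>u\<close> with a shortest arc. The arc of every neighbour is at
  least as long, so its trace on the arc of \<open>u\<close> is the union of an initial and a final segment.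
  Two disjoint traces of this kind include a proper initial segment; hence, choosing for \<open>v\<close> the
  neighbour with the shortest proper initial trace (any neighbour if there is none), two neighbours
  whose traces both meet that of \<open>v\<close> have intersecting arcs. By the Helly property the trace of
  every common neighbour of \<open>u\<close> and \<open>v\<close> meets that of \<open>v\<close>, so the common neighbours form a
  clique, and together with \<open>u\<close> and \<open>v\<close> they form the only maxclique containing \<open>uv\<close>.\<close>

definition arc :: "nat \<Rightarrow> nat \<Rightarrow> nat \<Rightarrow> nat set" where
  "arc n s k = {(s + i) mod n | i. i \<le> k}"

definition arc_trace :: "nat \<Rightarrow> nat \<Rightarrow> nat \<Rightarrow> nat set \<Rightarrow> nat set" where
  "arc_trace n s k A = {i. i \<le> k \<and> (s + i) mod n \<in> A}"

definition prefix_suffix :: "nat \<Rightarrow> nat set \<Rightarrow> bool" where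
  "prefix_suffix k T \<longleftrightarrow> T \<subseteq> {..k} \<and> (\<forall>j\<in>T. {..j} \<subseteq> T \<or> {j..k} \<subseteq> T)"

lemma is_arc_iff: "is_arc n A \<longleftrightarrow> (\<exists>s<n. \<exists>k<n. A = arc n s k)"
  unfolding is_arc_def arc_def ..

lemma arc_nonempty: "arc n s k \<noteq> {}"
  unfolding arc_def by blast

lemma arc_trace_Int: "arc_trace n s k (A \<inter> B) = arc_trace n s k A \<inter> arc_trace n s k B"
  unfolding arc_trace_def by blast

lemma arc_trace_empty_iff: "arc_trace n s k A = {} \<longleftrightarrow> arc n s k \<inter> A = {}"
  unfolding arc_trace_def arc_def by blast

lemma mod_add_right_cancel_nat:
  fixes a b c n :: nat
  shows "(a + c) mod n = (b + c) mod n \<longleftrightarrow> a mod n = b mod n"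
  by (simp add: nat_mod_eq_iff)

lemma prefix_suffix_arc_trace:
  assumes "k \<le> k'"
  shows "prefix_suffix k (arc_trace n s k (arc n s' k'))"
  unfolding prefix_suffix_def
proof (intro conjI ballI)
  let ?T = "arc_trace n s k (arc n s' k')"
  show "?T \<subseteq> {..k}" unfolding arc_trace_def by auto
  fix j assume "j \<in> ?T"
  then obtain m where j: "j \<le> k" and m: "m \<le> k'" "(s + j) mod n = (s' + m) mod n"
    unfolding arc_trace_def arc_def by auto
  show "{..j} \<subseteq> ?T \<or> {j..k} \<subseteq> ?T"
  proof (cases "j \<le> m")
    case True
    have "i \<in> ?T" if "i \<le> j" for i
    proof -
      have "(s + i + (j - i)) mod n = (s' + (m - (j - i)) + (j - i)) mod n"
        using m True that by simp
      then have "(s + i) mod n = (s' + (m - (j - i))) mod n"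
        by (simp only: mod_add_right_cancel_nat)
      then show ?thesis unfolding arc_trace_def arc_def using that j m by fastforce
    qed
    then show ?thesis by auto
  next
    case False
    have "i \<in> ?T" if "j \<le> i" "i \<le> k" for i
    proof -
      have "(s + i) mod n = ((s + j) + (i - j)) mod n"
        using that by simp
      also have "\<dots> = ((s + j) mod n + (i - j)) mod n"
        by (simp add: mod_add_left_eq)
      also have "\<dots> = (s' + (m + (i - j))) mod n"
        using m by (simp add: mod_add_left_eq add.assoc)
      finally show ?thesis
        unfolding arc_trace_def arc_def using that False assms by fastforce
    qed
    then show ?thesis by auto
  qed
qed

lemma prefix_suffix_disjoint_proper_prefix:
  assumes "prefix_suffix k T1" "prefix_suffix k T2" "T1 \<noteq> {}" "T2 \<noteq> {}" "T1 \<inter> T2 = {}"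
  shows "(0 \<in> T1 \<and> k \<notin> T1) \<or> (0 \<in> T2 \<and> k \<notin> T2)"
proof -
  have "0 \<in> T \<or> k \<in> T" if "prefix_suffix k T" "T \<noteq> {}" for T
    using that unfolding prefix_suffix_def by fastforce
  then show ?thesis using assms by blast
qed

lemma prefix_suffix_proper_prefix:
  assumes "prefix_suffix k T" "0 \<in> T" "k \<notin> T"
  shows "T = {..Max T}"
proof -
  have "finite T" using assms(1) finite_subset unfolding prefix_suffix_def by blast
  then have max: "Max T \<in> T" using Max_in assms(2) by blast
  then have "Max T \<le> k" using assms(1) unfolding prefix_suffix_def by blast
  then have "\<not> {Max T..k} \<subseteq> T" using assms(3) by auto
  then have "{..Max T} \<subseteq> T" using assms(1) max unfolding prefix_suffix_def by blast
  then show ?thesis using Max_ge[OF \<open>finite T\<close>] by auto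
qed

lemma prefix_suffix_pivot:
  assumes "x0 \<in> N" and ps: "\<And>x. x \<in> N \<Longrightarrow> prefix_suffix k (T x)"
    and ne: "\<And>x. x \<in> N \<Longrightarrow> T x \<noteq> {}"
  shows "\<exists>v\<in>N. \<forall>w\<in>N. \<forall>w'\<in>N. T w \<inter> T v \<noteq> {} \<longrightarrow> T w' \<inter> T v \<noteq> {} \<longrightarrow>
    T w \<inter> T w' \<noteq> {}"
proof -
  define Pre where "Pre = {x \<in> N. 0 \<in> T x \<and> k \<notin> T x}"
  obtain v where v: "v \<in> N" and v_least: "\<And>x. x \<in> Pre \<Longrightarrow> T v \<subseteq> T x"
  proof (cases "Pre = {}")
    case True
    with \<open>x0 \<in> N\<close> that show ?thesis by blast
  next
    case False
    then obtain v where v: "v \<in> Pre" and min: "\<And>x. x \<in> Pre \<Longrightarrow> Max (T v) \<le> Max (T x)"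
      using ex_has_least_nat[of "\<lambda>x. x \<in> Pre" _ "\<lambda>x. Max (T x)"] by blast
    have prefix: "T x = {..Max (T x)}" if "x \<in> Pre" for x
      using prefix_suffix_proper_prefix[OF ps] that unfolding Pre_def by blast
    have "T v \<subseteq> T x" if "x \<in> Pre" for x
    proof -
      have "{..Max (T v)} \<subseteq> {..Max (T x)}" using min[OF that] by simp
      then show ?thesis by (simp only: prefix[OF v, symmetric] prefix[OF that, symmetric])
    qed
    with v that show ?thesis unfolding Pre_def by blast
  qed
  have "T w \<inter> T w' \<noteq> {}"
    if "w \<in> N" "w' \<in> N" "T w \<inter> T v \<noteq> {}" "T w' \<inter> T v \<noteq> {}" for w w'
  proof
    assume disjoint: "T w \<inter> T w' = {}"
    then have "w \<in> Pre \<or> w' \<in> Pre"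
      using prefix_suffix_disjoint_proper_prefix[OF ps ps ne ne] that unfolding Pre_def by blast
    then show False using disjoint v_least that by blast
  qed
  with v show ?thesis by blast
qed

lemma helly_family_triangle:
  assumes "helly_family n V \<alpha>" "\<And>x. x \<in> V \<Longrightarrow> \<alpha> x \<noteq> {}" "u \<in> V" "v \<in> V" "w \<in> V"
    "\<alpha> u \<inter> \<alpha> v \<noteq> {}" "\<alpha> u \<inter> \<alpha> w \<noteq> {}" "\<alpha> v \<inter> \<alpha> w \<noteq> {}"
  shows "\<alpha> u \<inter> \<alpha> v \<inter> \<alpha> w \<noteq> {}"
proof -
  have "{u, v, w} \<subseteq> V" using assms(3-5) by blast
  moreover have "\<forall>a\<in>{u, v, w}. \<forall>b\<in>{u, v, w}. \<alpha> a \<inter> \<alpha> b \<noteq> {}"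
    using assms(2-8) by (simp add: Int_commute)
  ultimately obtain p where "\<forall>x\<in>{u, v, w}. p \<in> \<alpha> x"
    using assms(1)[unfolded helly_family_def, rule_format, of "{u, v, w}"] by blast
  then show ?thesis by blast
qed

lemma essential_edge_if_common_neighbours_adjacent:
  assumes "simple_graph V E" "u \<in> V" "v \<in> V" "E u v"
    and common: "\<And>w w'. w \<in> V \<Longrightarrow> w' \<in> V \<Longrightarrow> w \<noteq> w' \<Longrightarrow> E u w \<Longrightarrow> E v w \<Longrightarrow>
      E u w' \<Longrightarrow> E v w' \<Longrightarrow> E w w'"
  shows "essential_edge V E u v"
proof -
  have sym: "\<And>a b. a \<in> V \<Longrightarrow> b \<in> V \<Longrightarrow> E a b \<Longrightarrow> E b a"
    using assms(1) unfolding simple_graph_def by blast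
  define K where "K = {u, v} \<union> {w \<in> V. E u w \<and> E v w}"
  have u_adj: "E u b" if "b \<in> K" "b \<noteq> u" for b
    using that assms(4) unfolding K_def by blast
  have v_adj: "E v b" if "b \<in> K" "b \<noteq> v" for b
    using that sym[OF assms(2-4)] unfolding K_def by blast
  have "E a b" if "a \<in> K" "b \<in> K" "a \<noteq> b" for a b
  proof (cases "a = u \<or> a = v")
    case True
    with that u_adj v_adj show ?thesis by blast
  next
    case False
    then have a: "a \<in> V" "E u a" "E v a" using that(1) unfolding K_def by blast+
    show ?thesis
    proof (cases "b = u \<or> b = v")
      case True
      with a sym assms(2,3) show ?thesis by blast
    next
      case False
      then have "b \<in> V" "E u b" "E v b" using that(2) unfolding K_def by blast+
      with a common that(3) show ?thesis by blast
    qed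
  qed
  moreover have "K \<subseteq> V" unfolding K_def using assms(2,3) by blast
  ultimately have K: "clique V E K" unfolding clique_def by blast
  have K_greatest: "D \<subseteq> K" if D: "clique V E D" "u \<in> D" "v \<in> D" for D
  proof
    fix x assume "x \<in> D"
    show "x \<in> K"
    proof (cases "x = u \<or> x = v")
      case True
      then show ?thesis unfolding K_def by blast
    next
      case False
      with D \<open>x \<in> D\<close> have "x \<in> V" "E u x" "E v x" unfolding clique_def by auto
      then show ?thesis unfolding K_def by blast
    qed
  qed
  have "u \<in> K" "v \<in> K" unfolding K_def by blast+
  with K K_greatest have "maxclique V E K \<and> u \<in> K \<and> v \<in> K"
    unfolding maxclique_def by blast
  moreover have "C = K" if "maxclique V E C \<and> u \<in> C \<and> v \<in> C" for C
    using that K K_greatest unfolding maxclique_def by blast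
  ultimately have "\<exists>!C. maxclique V E C \<and> u \<in> C \<and> v \<in> C" by blast
  then show ?thesis unfolding essential_edge_def using assms(2-4) by blast
qed

lemma HCA_model_shortest_arc:
  assumes "HCA_model V E n \<alpha>" "\<exists>u\<in>V. \<exists>v\<in>V. E u v"
  obtains u s k where "u \<in> V" "\<exists>y\<in>V. E u y" "\<alpha> u = arc n s k"
    "\<And>x s' k'. x \<in> V \<Longrightarrow> \<exists>y\<in>V. E x y \<Longrightarrow> \<alpha> x = arc n s' k' \<Longrightarrow> k \<le> k'"
proof -
  have arcs: "\<And>x. x \<in> V \<Longrightarrow> \<exists>s k. \<alpha> x = arc n s k"
    using assms(1) unfolding HCA_model_def is_arc_iff by blast
  define short where
    "short k \<longleftrightarrow> (\<exists>x\<in>V. \<exists>s. (\<exists>y\<in>V. E x y) \<and> \<alpha> x = arc n s k)" for k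
  have "\<exists>k. short k"
  proof -
    obtain x y where "x \<in> V" "y \<in> V" "E x y" using assms(2) by blast
    moreover obtain s k where "\<alpha> x = arc n s k" using arcs \<open>x \<in> V\<close> by blast
    ultimately show ?thesis unfolding short_def by blast
  qed
  define k where "k = (LEAST k. short k)"
  have "short k" unfolding k_def using \<open>\<exists>k. short k\<close> by (rule LeastI_ex)
  moreover have "k \<le> k'" if "x \<in> V" "\<exists>y\<in>V. E x y" "\<alpha> x = arc n s' k'" for x s' k'
  proof -
    have "short k'" using that unfolding short_def by blast
    then show ?thesis unfolding k_def by (rule Least_le)
  qed
  ultimately show ?thesis using that unfolding short_def by blast
qed

lemma HCA_model_edge_with_adjacent_common_neighbours:
  assumes "simple_graph V E" "HCA_model V E n \<alpha>" "\<exists>u\<in>V. \<exists>v\<in>V. E u v"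
  obtains u v where "u \<in> V" "v \<in> V" "E u v"
    "\<And>w w'. w \<in> V \<Longrightarrow> w' \<in> V \<Longrightarrow> w \<noteq> w' \<Longrightarrow> E u w \<Longrightarrow> E v w \<Longrightarrow>
      E u w' \<Longrightarrow> E v w' \<Longrightarrow> E w w'"
proof -
  have sym: "\<And>a b. a \<in> V \<Longrightarrow> b \<in> V \<Longrightarrow> E a b \<Longrightarrow> E b a"
    and irr: "\<And>a. a \<in> V \<Longrightarrow> \<not> E a a"
    using assms(1) unfolding simple_graph_def by blast+
  have arcs: "\<And>x. x \<in> V \<Longrightarrow> \<exists>s k. \<alpha> x = arc n s k"
    and adj: "\<And>a b. a \<in> V \<Longrightarrow> b \<in> V \<Longrightarrow> a \<noteq> b \<Longrightarrow> E a b \<longleftrightarrow> \<alpha> a \<inter> \<alpha> b \<noteq> {}"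
    and helly: "helly_family n V \<alpha>"
    using assms(2) unfolding HCA_model_def is_arc_iff by blast+
  have meet: "\<alpha> a \<inter> \<alpha> b \<noteq> {}" if "a \<in> V" "b \<in> V" "E a b" for a b
    using adj[OF that(1,2)] irr that by blast
  have \<alpha>_nonempty: "\<alpha> x \<noteq> {}" if "x \<in> V" for x
    using arcs[OF that] arc_nonempty by blast
  obtain u s k where u: "u \<in> V" "\<exists>y\<in>V. E u y" and \<alpha>u: "\<alpha> u = arc n s k"
    and k_least: "\<And>x s' k'. x \<in> V \<Longrightarrow> \<exists>y\<in>V. E x y \<Longrightarrow> \<alpha> x = arc n s' k' \<Longrightarrow> k \<le> k'"
    using HCA_model_shortest_arc[OF assms(2,3)] by blast
  define N where "N = {x \<in> V. E u x}"
  define T where "T x = arc_trace n s k (\<alpha> x)" for x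
  have ps: "prefix_suffix k (T x)" if x: "x \<in> N" for x
  proof -
    have "x \<in> V" "E x u" using x sym u(1) unfolding N_def by blast+
    moreover obtain s' k' where \<alpha>x: "\<alpha> x = arc n s' k'" using arcs \<open>x \<in> V\<close> by blast
    ultimately have "k \<le> k'" using k_least u(1) by blast
    then show ?thesis unfolding T_def \<alpha>x by (rule prefix_suffix_arc_trace)
  qed
  have ne: "T x \<noteq> {}" if "x \<in> N" for x
  proof -
    have "\<alpha> u \<inter> \<alpha> x \<noteq> {}" using meet[OF u(1)] that unfolding N_def by blast
    then show ?thesis unfolding T_def arc_trace_empty_iff \<alpha>u .
  qed
  obtain x0 where "x0 \<in> N" using u unfolding N_def by blast
  from prefix_suffix_pivot[OF this ps ne] obtain v where v: "v \<in> N"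
    and pivot: "\<forall>w\<in>N. \<forall>w'\<in>N.
      T w \<inter> T v \<noteq> {} \<longrightarrow> T w' \<inter> T v \<noteq> {} \<longrightarrow> T w \<inter> T w' \<noteq> {}" ..
  have "v \<in> V" "E u v" using v unfolding N_def by blast+
  have trace_meet: "T w \<inter> T v \<noteq> {}" if w: "w \<in> V" "E u w" "E v w" for w
  proof -
    have "\<alpha> u \<inter> \<alpha> v \<inter> \<alpha> w \<noteq> {}"
      using helly_family_triangle[OF helly \<alpha>_nonempty u(1) \<open>v \<in> V\<close> w(1)]
        meet[OF u(1) \<open>v \<in> V\<close> \<open>E u v\<close>] meet[OF u(1) w(1,2)] meet[OF \<open>v \<in> V\<close> w(1,3)]
      by blast
    then show ?thesis unfolding T_def arc_trace_Int[symmetric] arc_trace_empty_iff \<alpha>u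
      by (simp add: Int_ac)
  qed
  have "E w w'" if "w \<in> V" "w' \<in> V" "w \<noteq> w'" "E u w" "E v w" "E u w'" "E v w'" for w w'
  proof -
    have "w \<in> N" "w' \<in> N" using that unfolding N_def by blast+
    moreover have "T w \<inter> T v \<noteq> {}" "T w' \<inter> T v \<noteq> {}"
      using trace_meet that by blast+
    ultimately have "T w \<inter> T w' \<noteq> {}" using pivot by simp
    then have "\<alpha> w \<inter> \<alpha> w' \<noteq> {}"
      unfolding T_def arc_trace_Int[symmetric] arc_trace_empty_iff by blast
    then show ?thesis using adj that by blast
  qed
  with that u(1) \<open>v \<in> V\<close> \<open>E u v\<close> show ?thesis by blast
qed

theorem lemma16:
  fixes V :: "'v set" and E :: "'v \<Rightarrow> 'v \<Rightarrow> bool"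
  assumes "HCA_graph V E"
    and "\<exists>u\<in>V. \<exists>v\<in>V. E u v"
  shows "\<exists>u\<in>V. \<exists>v\<in>V. essential_edge V E u v"
proof -
  obtain n \<alpha> where graph: "simple_graph V E" and model: "HCA_model V E n \<alpha>"
    using assms(1) unfolding HCA_graph_def by blast
  obtain u v where uv: "u \<in> V" "v \<in> V" "E u v"
    "\<And>w w'. w \<in> V \<Longrightarrow> w' \<in> V \<Longrightarrow> w \<noteq> w' \<Longrightarrow> E u w \<Longrightarrow> E v w \<Longrightarrow>
      E u w' \<Longrightarrow> E v w' \<Longrightarrow> E w w'"
    using HCA_model_edge_with_adjacent_common_neighbours[OF graph model assms(2)] by blast
  have "essential_edge V E u v"
    using graph uv by (rule essential_edge_if_common_neighbours_adjacent)
  with uv(1,2) show ?thesis by blast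
qed

end
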